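(* Suppose $V$ is irreducible and let $\bar p$ be the (unique) maximizer of $p\mapsto\min_{k}\mathrm{SIR}_k(p)/\gamma_k$ over $\mathcal P$. Then $\mathcal N_0(\bar p)=\{n_0\in\mathcal N:\rho(B^{(n_0)})=\max_{n\in\mathcal N}\rho(B^{(n)})\}$. Moreover, the SIR targets $\gamma=(\gamma_1,\dots,\gamma_K)\in\mathbb R_{++}^K$ are feasible (i.e. there exists $p\in\mathcal P$ with $\mathrm{SIR}_k(p)\ge\gamma_k$ for all $k$) if and only if $\max_{n\in\mathcal N}\rho(B^{(n)})=\max_{n\in\mathcal N}\rho(A^{(n)})\le 1$, where $\Gamma=\mathrm{diag}(\gamma_1,\dots,\gamma_K)$.
   Context: Network model: $K\ge 2$ links, $\mathcal K=\{1,\dots,K\}$. Power constraint set $\mathcal P=\{p\in\mathbb R_+^K: Cp\le\hat p\}$, where $C\in\{0,1\}^{N\times K}$ has at least one entry equal to $1$ in each column and $\hat p=(P_1,\dots,P_N)\in\mathbb R_{++}^N$; $\mathcal N=\{1,\dots,N\}$; $c_n\in\{0,1\}^K$ is the $n$-th row of $C$ (as a column vector) and $g_n(p)=c_n^Tp/P_n$. Gain matrix $V\in\mathbb R_+^{K\times K}$ with zero diagonal, noise vector $z\in\mathbb R_{++}^K$, $\mathrm{SIR}_k(p)=p_k/((Vp)_k+z_k)$. For $n\in\mathcal N$: $B^{(n)}=\Gamma V+\frac1{P_n}\Gamma z c_n^T$ and $A^{(n)}=\begin{pmatrix}\Gamma V&\Gamma z\\ \frac1{P_n}c_n^T\Gamma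 V&\frac1{P_n}c_n^T\Gamma z\end{pmatrix}$. For $p\in\mathbb R_+^K$, $\mathcal N_0(p)=\{n\in\mathcal N: g_n(p)=\max_{m\in\mathcal N}g_m(p)=1\}$. $\rho(\cdot)$ denotes spectral radius. *)

theory Defs
  imports Complex_Main "Jordan_Normal_Form.Matrix" "Jordan_Normal_Form.Spectral_Radius"
begin

(* Vectors/matrices are Jordan_Normal_Form vec/mat with explicit dimensions.
   Indices are 0-based: link k corresponds to index k-1, constraint n to index n-1. *)

definition irreducible_mat :: "real mat \<Rightarrow> bool" where
  "irreducible_mat V \<longleftrightarrow> (\<forall>i j. i < dim_row V \<longrightarrow> j < dim_row V \<longrightarrow> i \<noteq> j \<longrightarrow>
      (\<exists>m. (V ^\<^sub>m m) $$ (i, j) > 0))"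

definition rho :: "real mat \<Rightarrow> real" where
  "rho M = spectral_radius (map_mat complex_of_real M)"

definition pset :: "nat \<Rightarrow> real mat \<Rightarrow> real vec \<Rightarrow> real vec set" where
  "pset K C phat = {p \<in> carrier_vec K. (\<forall>k<K. 0 \<le> p $ k) \<and>
                      (\<forall>n<dim_row C. (C *\<^sub>v p) $ n \<le> phat $ n)}"

definition gfun :: "real mat \<Rightarrow> real vec \<Rightarrow> nat \<Rightarrow> real vec \<Rightarrow> real" where
  "gfun C phat n p = (row C n \<bullet> p) / phat $ n"

definition N0 :: "nat \<Rightarrow> real mat \<Rightarrow> real vec \<Rightarrow> real vec \<Rightarrow> nat set" where
  "N0 N C phat p = {n. n < N \<and> gfun C phat n p = Max {gfun C phat m p | m. m < N}
                        \<and> Max {gfun C phat m p | m. m < N} = 1}"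

definition SIR :: "real mat \<Rightarrow> real vec \<Rightarrow> nat \<Rightarrow> real vec \<Rightarrow> real" where
  "SIR V z k p = p $ k / ((V *\<^sub>v p) $ k + z $ k)"

definition Gam :: "nat \<Rightarrow> real vec \<Rightarrow> real mat" where
  "Gam K gamma = mat K K (\<lambda>(i, j). if i = j then gamma $ i else 0)"

definition Bmat :: "nat \<Rightarrow> real mat \<Rightarrow> real vec \<Rightarrow> real mat \<Rightarrow> real vec \<Rightarrow> real vec \<Rightarrow> nat \<Rightarrow> real mat" where
  "Bmat K C phat V z gamma n =
     Gam K gamma * V + (1 / phat $ n) \<cdot>\<^sub>m (mat_of_cols K [Gam K gamma *\<^sub>v z] * mat_of_rows K [row C n])"

definition Amat :: "nat \<Rightarrow> real mat \<Rightarrow> real vec \<Rightarrow> real mat \<Rightarrow> real vec \<Rightarrow> real vec \<Rightarrow> nat \<Rightarrow> real mat" where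
  "Amat K C phat V z gamma n =
     four_block_mat
       (Gam K gamma * V)
       (mat_of_cols K [Gam K gamma *\<^sub>v z])
       ((1 / phat $ n) \<cdot>\<^sub>m (mat_of_rows K [row C n] * (Gam K gamma * V)))
       (mat 1 1 (\<lambda>_. (1 / phat $ n) * (row C n \<bullet> (Gam K gamma *\<^sub>v z))))"

end

theory Submission
  imports Defs
begin

(* Let c be the optimal value of min_k SIR_k(p)/gamma_k over the power set P, attained at pbar.
   1. Balancing: at the optimum every weighted SIR equals c.  Otherwise irreducibility of V
      gives a tight link interfered with by a non-tight one; shrinking the powers of all
      non-tight links slightly keeps the minimum at c and makes that tight link non-tight.
      Iterating empties the tight set, which is absurd.  Hence pbar = c Gamma (V pbar + z).
   2. Some power constraint is active at pbar, i.e. max_n g_n(pbar) = 1: otherwise scaling pbar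
      up would improve every SIR.
   3. By 1, B^(n) pbar = pbar/c - (1 - g_n(pbar)) Gamma z and A^(n) (pbar;1) = (pbar; g_n(pbar))/c.
      Collatz-Wielandt bounds for nonnegative matrices give rho(B^(n)), rho(A^(n)) <= 1/c,
      with equality if g_n(pbar) = 1 and rho(B^(n)) < 1/c if g_n(pbar) < 1.
   4. Both maxima therefore equal 1/c, N_0(pbar) is the set of maximizers of rho(B^(n)), and
      gamma is feasible iff c >= 1 iff 1/c <= 1.
   The file first proves the matrix facts (Collatz-Wielandt bounds, edges leaving a set in an
   irreducible matrix), then develops the network model in the locales network and optimum.
   The argument needs only K > 0. *)

lemma Collect_lessThan_image: "{f k | k. k < n} = f ` {..<n}"
  by auto

lemma Max_attained:
  fixes f :: "nat \<Rightarrow> real"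
  assumes "\<forall>n<N. f n \<le> a" and "n0 < N" and "f n0 = a"
  shows "Max {f n | n. n < N} = a"
  unfolding Collect_lessThan_image using assms by (intro Max_eqI) auto

lemma exists_uniform_shrink:
  fixes f :: "'a \<Rightarrow> real"
  assumes T: "finite T" and c: "0 < c" and above: "\<forall>k\<in>T. c < f k"
  shows "\<exists>t. 0 < t \<and> t < 1 \<and> (\<forall>k\<in>T. c < t * f k)"
proof -
  define R where "R = insert (1/2) ((\<lambda>k. c / f k) ` T)"
  define M where "M = Max R"
  have R: "finite R" "R \<noteq> {}" using T by (auto simp: R_def)
  have ratio_lt: "c / f k < 1" if "k \<in> T" for k
    using above that c by (simp add: divide_less_eq)
  have M_lt: "M < 1" unfolding M_def using R ratio_lt by (subst Max_less_iff) (auto simp: R_def)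
  have M_half: "1/2 \<le> M" unfolding M_def using R by (intro Max_ge) (auto simp: R_def)
  have ratio_le: "c / f k \<le> M" if "k \<in> T" for k
    unfolding M_def using R that by (intro Max_ge) (auto simp: R_def)
  show ?thesis
  proof (intro exI[of _ "(1 + M) / 2"] conjI ballI)
    show "0 < (1 + M) / 2" "(1 + M) / 2 < 1" using M_lt M_half by auto
    fix k assume k: "k \<in> T"
    have "M < (1 + M) / 2" using M_lt by simp
    with ratio_le[OF k] have "c / f k < (1 + M) / 2" by (rule le_less_trans)
    moreover have "0 < f k" using above k c by force
    ultimately show "c < (1 + M) / 2 * f k" by (simp add: divide_less_eq mult.commute)
  qed
qed

lemma ratio_antimono_interference:
  "(0::real) \<le> a \<Longrightarrow> 0 < g \<Longrightarrow> 0 \<le> x' \<Longrightarrow> x' \<le> x \<Longrightarrow> 0 < z \<Longrightarrow> a/(g*(x+z)) \<le> a/(g*(x'+z))"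
  by (intro divide_left_mono mult_left_mono) (auto intro: mult_pos_pos)

lemma ratio_strict_antimono_interference:
  "(0::real) < a \<Longrightarrow> 0 < g \<Longrightarrow> 0 \<le> x' \<Longrightarrow> x' < x \<Longrightarrow> 0 < z \<Longrightarrow> a/(g*(x+z)) < a/(g*(x'+z))"
  by (intro divide_strict_left_mono mult_strict_left_mono) (auto intro: mult_pos_pos)

(* Scaling all powers by s > 1 strictly improves every SIR, since the noise does not scale. *)
lemma ratio_scale_up:
  assumes "(0::real) < a" "0 < g" "0 \<le> x" "0 < z" "1 < s"
  shows "a/(g*(x+z)) < s*a/(g*(s*x+z))"
proof -
  have zs: "0 < z / s" "z / s < z" using assms by (auto simp: divide_less_eq)
  have "a/(g*(x+z)) < a/(g*(x+z/s))"
    using assms zs by (intro divide_strict_left_mono mult_strict_left_mono) (auto intro!: mult_pos_pos)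
  also have "\<dots> = s*a/(g*(s*x+z))" using assms by (simp add: field_simps)
  finally show ?thesis .
qed

lemma collatz_wielandt_upper:
  fixes M :: "real mat" and p :: "nat \<Rightarrow> real"
  assumes M: "M \<in> carrier_mat n n" and n: "0 < n"
    and nn: "\<forall>i<n. \<forall>j<n. M $$ (i,j) \<ge> 0"
    and pp: "\<forall>i<n. p i > 0"
    and ineq: "\<forall>i<n. (\<Sum>j<n. M $$ (i,j) * p j) \<le> l * p i"
  shows "rho M \<le> l"
proof -
  let ?MC = "map_mat complex_of_real M"
  have MC: "?MC \<in> carrier_mat n n" using M by auto
  from spectral_radius_mem_max(1)[OF MC n] obtain a where
    a: "a \<in> spectrum ?MC" and r: "rho M = norm a" unfolding rho_def by auto
  from a obtain v where v: "v \<in> carrier_vec n" "v \<noteq> 0\<^sub>v n" "?MC *\<^sub>v v = a \<cdot>\<^sub>v v"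
    unfolding spectrum_def eigenvalue_def eigenvector_def using MC by auto
  (* compare |v| with the largest multiple t p of p that it touches, at coordinate i *)
  define S where "S = (\<lambda>j. norm (v $ j) / p j) ` {..<n}"
  have fS: "finite S" "S \<noteq> {}" using n unfolding S_def by auto
  define t where "t = Max S"
  obtain i where i: "i < n" "t = norm (v $ i) / p i"
    using Max_in[OF fS] unfolding t_def S_def by auto
  have tj: "norm (v $ j) \<le> t * p j" if "j < n" for j
  proof -
    have "norm (v $ j) / p j \<le> t" unfolding t_def using that fS by (intro Max_ge) (auto simp: S_def)
    thus ?thesis using pp that by (simp add: divide_le_eq)
  qed
  obtain j where j: "j < n" "v $ j \<noteq> 0" using v by (metis eq_vecI carrier_vecD index_zero_vec)
  have "0 < norm (v $ j)" using j by auto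
  also have "\<dots> \<le> t * p j" using tj j by auto
  finally have tpos: "t > 0" using pp j by (auto simp: zero_less_mult_iff)
  have vi: "norm (v $ i) = t * p i" using i pp by auto
  have "norm a * norm (v $ i) = norm ((?MC *\<^sub>v v) $ i)" using v i by (simp add: norm_mult)
  also have "(?MC *\<^sub>v v) $ i = (\<Sum>j<n. complex_of_real (M $$ (i,j)) * v $ j)"
    using M v(1) i by (simp add: mult_mat_vec_def scalar_prod_def lessThan_atLeast0 ac_simps)
  also have "norm \<dots> \<le> (\<Sum>j<n. M $$ (i,j) * norm (v $ j))"
    by (rule order.trans[OF norm_sum]) (use nn i in \<open>auto simp: norm_mult\<close>)
  also have "\<dots> \<le> (\<Sum>j<n. M $$ (i,j) * (t * p j))"
    by (rule sum_mono, rule mult_left_mono) (use nn i tj in auto)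
  also have "\<dots> = t * (\<Sum>j<n. M $$ (i,j) * p j)" by (simp add: sum_distrib_left ac_simps)
  also have "\<dots> \<le> t * (l * p i)" using ineq i(1) tpos by (intro mult_left_mono) auto
  also have "\<dots> = l * norm (v $ i)" using vi by simp
  finally have "norm a * norm (v $ i) \<le> l * norm (v $ i)" .
  moreover have "norm (v $ i) > 0" using vi tpos pp i by auto
  ultimately show ?thesis using r by simp
qed

(* Strict form: M p < l p componentwise gives rho(M) < l (apply the bound to the largest ratio). *)
lemma collatz_wielandt_strict:
  fixes M :: "real mat" and p :: "nat \<Rightarrow> real"
  assumes M: "M \<in> carrier_mat n n" and n: "0 < n"
    and nn: "\<forall>i<n. \<forall>j<n. M $$ (i,j) \<ge> 0"
    and pp: "\<forall>i<n. p i > 0"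
    and ineq: "\<forall>i<n. (\<Sum>j<n. M $$ (i,j) * p j) < l * p i"
  shows "rho M < l"
proof -
  define h where "h i = (\<Sum>j<n. M $$ (i,j) * p j) / p i" for i
  define l' where "l' = Max (h ` {..<n})"
  have fin: "finite (h ` {..<n})" "h ` {..<n} \<noteq> {}" using n by auto
  have "l' < l" unfolding l'_def using fin ineq pp by (subst Max_less_iff) (auto simp: h_def divide_less_eq)
  moreover have "rho M \<le> l'"
  proof (rule collatz_wielandt_upper[OF M n nn pp], intro allI impI)
    fix i assume i: "i < n"
    have "h i \<le> l'" unfolding l'_def using fin i by (intro Max_ge) auto
    thus "(\<Sum>j<n. M $$ (i,j) * p j) \<le> l' * p i" using pp i by (simp add: h_def divide_le_eq)
  qed
  ultimately show ?thesis by simp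
qed

lemma eigenvalue_le_rho:
  fixes M :: "real mat" and p :: "nat \<Rightarrow> real"
  assumes M: "M \<in> carrier_mat n n" and n: "0 < n"
    and ex: "\<exists>i<n. p i \<noteq> 0" and l: "l \<ge> 0"
    and eq: "\<forall>i<n. (\<Sum>j<n. M $$ (i,j) * p j) = l * p i"
  shows "l \<le> rho M"
proof -
  let ?MC = "map_mat complex_of_real M"
  have MC: "?MC \<in> carrier_mat n n" using M by auto
  define v where "v = vec n (\<lambda>i. complex_of_real (p i))"
  have "v \<noteq> 0\<^sub>v n" using ex unfolding v_def by (metis index_vec index_zero_vec(1) of_real_eq_0_iff)
  moreover have "?MC *\<^sub>v v = complex_of_real l \<cdot>\<^sub>v v"
  proof (rule eq_vecI)
    fix i assume i: "i < dim_vec (complex_of_real l \<cdot>\<^sub>v v)"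
    hence i: "i < n" by (simp add: v_def)
    have "(?MC *\<^sub>v v) $ i = (\<Sum>j<n. complex_of_real (M $$ (i,j) * p j))"
      using M i by (simp add: mult_mat_vec_def scalar_prod_def lessThan_atLeast0 v_def)
    also have "\<dots> = complex_of_real (\<Sum>j<n. M $$ (i,j) * p j)" by simp
    also have "\<dots> = (complex_of_real l \<cdot>\<^sub>v v) $ i" using eq i by (simp add: v_def)
    finally show "(?MC *\<^sub>v v) $ i = (complex_of_real l \<cdot>\<^sub>v v) $ i" .
  qed (use M in \<open>auto simp: v_def\<close>)
  ultimately have "complex_of_real l \<in> spectrum ?MC"
    unfolding spectrum_def eigenvalue_def eigenvector_def using M
    by (intro CollectI exI[of _ v]) (auto simp: v_def)
  from spectral_radius_mem_max(2)[OF MC n imageI[OF this]] l show ?thesis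
    unfolding rho_def by simp
qed

(* A positive entry (V^m)(i,j) is a path i -> j; if it starts in S and ends outside S,
   one of its edges leaves S. *)
lemma positive_path_leaves_set:
  fixes V :: "real mat"
  assumes V: "V \<in> carrier_mat K K" and nn: "\<forall>i<K. \<forall>j<K. V $$ (i,j) \<ge> 0"
    and S: "S \<subseteq> {..<K}" and i: "i \<in> S"
  shows "j < K \<Longrightarrow> j \<notin> S \<Longrightarrow> (V ^\<^sub>m m) $$ (i,j) > 0 \<Longrightarrow> \<exists>a\<in>S. \<exists>b<K. b \<notin> S \<and> V $$ (a,b) > 0"
proof (induction m arbitrary: j)
  case 0
  have "i < K" using S i by auto
  moreover have "i \<noteq> j" using 0 i by auto
  ultimately show ?case using 0 V by auto
next
  case (Suc m)
  have iK: "i < K" using S i by auto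
  have "(V ^\<^sub>m Suc m) $$ (i,j) = (\<Sum>l<K. (V ^\<^sub>m m) $$ (i,l) * V $$ (l,j))"
    using V iK Suc.prems by (simp add: scalar_prod_def lessThan_atLeast0)
  with Suc.prems have "(\<Sum>l<K. (V ^\<^sub>m m) $$ (i,l) * V $$ (l,j)) > 0" by simp
  then obtain l where l: "l < K" "(V ^\<^sub>m m) $$ (i,l) * V $$ (l,j) > 0"
    by (metis (no_types, lifting) lessThan_iff not_le sum_nonpos)
  have Vlj: "V $$ (l,j) > 0" and Vm: "(V ^\<^sub>m m) $$ (i,l) > 0"
  proof -
    have "V $$ (l,j) \<ge> 0" using nn l(1) Suc.prems(1) by auto
    with l(2) show "V $$ (l,j) > 0" "(V ^\<^sub>m m) $$ (i,l) > 0" by (auto simp: zero_less_mult_iff)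
  qed
  show ?case
  proof (cases "l \<in> S")
    case True thus ?thesis using Vlj Suc.prems by blast
  next
    case False thus ?thesis using Suc.IH[OF l(1) False Vm] by blast
  qed
qed

lemma irreducible_edge_leaving:
  fixes V :: "real mat"
  assumes V: "V \<in> carrier_mat K K" and nn: "\<forall>i<K. \<forall>j<K. V $$ (i,j) \<ge> 0"
    and irr: "irreducible_mat V"
    and S: "S \<subseteq> {..<K}" and i: "i \<in> S" and j: "j < K" "j \<notin> S"
  shows "\<exists>a\<in>S. \<exists>b<K. b \<notin> S \<and> V $$ (a,b) > 0"
proof -
  have "i < K" "i \<noteq> j" using S i j by auto
  then obtain m where "(V ^\<^sub>m m) $$ (i, j) > 0"
    using irr V j unfolding irreducible_mat_def by auto
  thus ?thesis using positive_path_leaves_set[OF V nn S i j] by blast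
qed

locale network =
  fixes K N :: nat and C V :: "real mat" and phat z gamma :: "real vec"
  assumes Kpos: "0 < K"
    and C_dim: "C \<in> carrier_mat N K"
    and C_01: "\<forall>n<N. \<forall>k<K. C $$ (n, k) = 0 \<or> C $$ (n, k) = 1"
    and C_col: "\<forall>k<K. \<exists>n<N. C $$ (n, k) = 1"
    and phat_pos: "\<forall>n<N. phat $ n > 0"
    and V_dim: "V \<in> carrier_mat K K"
    and V_nonneg: "\<forall>i<K. \<forall>j<K. V $$ (i, j) \<ge> 0"
    and V_irr: "irreducible_mat V"
    and z_dim: "z \<in> carrier_vec K" and z_pos: "\<forall>k<K. z $ k > 0"
    and gamma_pos: "\<forall>k<K. gamma $ k > 0"
begin

definition interf :: "real vec \<Rightarrow> nat \<Rightarrow> real" where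
  "interf p k = (\<Sum>j<K. V $$ (k,j) * p $ j)"

definition load :: "real vec \<Rightarrow> nat \<Rightarrow> real" where
  "load p n = (\<Sum>k<K. C $$ (n,k) * p $ k)"

abbreviation wsir :: "real vec \<Rightarrow> nat \<Rightarrow> real" where
  "wsir p k \<equiv> SIR V z k p / gamma $ k"

abbreviation min_wsir :: "real vec \<Rightarrow> real" where
  "min_wsir p \<equiv> Min {SIR V z k p / gamma $ k | k. k < K}"

lemma Npos: "N > 0" using C_col Kpos by auto

lemma C_nn: "n < N \<Longrightarrow> k < K \<Longrightarrow> C $$ (n,k) \<ge> 0" using C_01 by fastforce

lemma C_le1: "n < N \<Longrightarrow> k < K \<Longrightarrow> C $$ (n,k) \<le> 1" using C_01 by fastforce

lemma pset_iff:
  "p \<in> pset K C phat \<longleftrightarrow> p \<in> carrier_vec K \<and> (\<forall>k<K. 0 \<le> p $ k) \<and> (\<forall>n<N. load p n \<le> phat $ n)"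
proof -
  have "p \<in> carrier_vec K \<Longrightarrow> n < N \<Longrightarrow> (C *\<^sub>v p) $ n = load p n" for n
    using C_dim by (simp add: load_def scalar_prod_def lessThan_atLeast0)
  thus ?thesis unfolding pset_def using C_dim by auto
qed

lemma gfun_eq: "p \<in> carrier_vec K \<Longrightarrow> n < N \<Longrightarrow> gfun C phat n p = load p n / phat $ n"
  using C_dim by (simp add: gfun_def load_def scalar_prod_def lessThan_atLeast0)

lemma interf_nn: "\<forall>k<K. 0 \<le> p $ k \<Longrightarrow> k < K \<Longrightarrow> interf p k \<ge> 0"
  unfolding interf_def using V_nonneg by (intro sum_nonneg) auto

lemma wsir_eq: "p \<in> carrier_vec K \<Longrightarrow> k < K \<Longrightarrow> wsir p k = p $ k / (gamma $ k * (interf p k + z $ k))"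
  using V_dim by (simp add: SIR_def interf_def scalar_prod_def lessThan_atLeast0 mult.commute)

lemma wsir_ge_1_iff: "k < K \<Longrightarrow> 1 \<le> wsir p k \<longleftrightarrow> gamma $ k \<le> SIR V z k p"
  using gamma_pos by (simp add: le_divide_eq)

lemma min_wsir_le: "k < K \<Longrightarrow> min_wsir p \<le> wsir p k"
  unfolding Collect_lessThan_image by (intro Min_le) auto

lemma min_wsir_attained: "\<exists>k<K. min_wsir p = wsir p k"
proof -
  have "min_wsir p \<in> (\<lambda>k. wsir p k) ` {..<K}"
    unfolding Collect_lessThan_image using Kpos by (intro Min_in) auto
  thus ?thesis by auto
qed

lemma min_wsir_greatest: "\<forall>k<K. a \<le> wsir p k \<Longrightarrow> a \<le> min_wsir p"
  using min_wsir_attained by metis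

(* The uniform power vector (min_n P_n / K) is feasible and positive. *)
lemma exists_positive_feasible: "\<exists>p0 \<in> pset K C phat. \<forall>k<K. p0 $ k > 0"
proof -
  define m where "m = Min ((\<lambda>n. phat $ n) ` {..<N})"
  have m: "m > 0" unfolding m_def using Npos phat_pos by (subst Min_gr_iff) auto
  have mle: "n < N \<Longrightarrow> m \<le> phat $ n" for n unfolding m_def by (intro Min_le) auto
  define d where "d = m / K"
  have d: "d > 0" using m Kpos by (simp add: d_def)
  have "load (vec K (\<lambda>_. d)) n \<le> phat $ n" if n: "n < N" for n
  proof -
    have "load (vec K (\<lambda>_. d)) n \<le> (\<Sum>k<K. 1 * d)" unfolding load_def
      by (intro sum_mono mult_right_mono) (use C_le1 n d in auto)
    also have "\<dots> = m" using Kpos by (simp add: d_def)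
    finally show ?thesis using mle[OF n] by linarith
  qed
  hence "vec K (\<lambda>_. d) \<in> pset K C phat" unfolding pset_iff using d by auto
  thus ?thesis using d by (intro bexI[of _ "vec K (\<lambda>_. d)"]) auto
qed

lemma pset_downward_closed:
  assumes p: "p \<in> pset K C phat" and p': "p' \<in> carrier_vec K"
    and nn: "\<forall>k<K. 0 \<le> p' $ k" and le: "\<forall>k<K. p' $ k \<le> p $ k"
  shows "p' \<in> pset K C phat"
proof -
  have "load p' n \<le> phat $ n" if n: "n < N" for n
  proof -
    have "load p' n \<le> load p n" unfolding load_def
      using le C_nn n by (intro sum_mono mult_left_mono) auto
    thus ?thesis using p n by (auto simp: pset_iff)
  qed
  thus ?thesis using p' nn by (auto simp: pset_iff)
qed

lemma interf_mono: "\<forall>j<K. p' $ j \<le> p $ j \<Longrightarrow> k < K \<Longrightarrow> interf p' k \<le> interf p k"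
  unfolding interf_def using V_nonneg by (intro sum_mono mult_left_mono) auto

lemma interf_strict_mono:
  assumes le: "\<forall>j<K. p' $ j \<le> p $ j" and a: "a < K" and b: "b < K"
    and edge: "V $$ (a,b) > 0" and lt: "p' $ b < p $ b"
  shows "interf p' a < interf p a"
  unfolding interf_def
proof (rule sum_strict_mono_ex1)
  show "\<forall>j\<in>{..<K}. V $$ (a, j) * p' $ j \<le> V $$ (a, j) * p $ j"
    using le V_nonneg a by (auto intro: mult_left_mono)
  show "\<exists>j\<in>{..<K}. V $$ (a, j) * p' $ j < V $$ (a, j) * p $ j"
    using edge lt b by (intro bexI[of _ b]) auto
qed auto

lemma wsir_scaled_ge:
  assumes p: "p \<in> carrier_vec K" and p': "p' \<in> carrier_vec K" and k: "k < K"
    and p'k: "p' $ k = t * p $ k" and num: "0 \<le> t * p $ k"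
    and nn': "\<forall>j<K. 0 \<le> p' $ j" and le: "interf p' k \<le> interf p k"
  shows "t * wsir p k \<le> wsir p' k"
proof -
  have "t * wsir p k = (t * p $ k) / (gamma $ k * (interf p k + z $ k))" using wsir_eq[OF p k] by simp
  also have "\<dots> \<le> (t * p $ k) / (gamma $ k * (interf p' k + z $ k))"
    using ratio_antimono_interference[OF num _ interf_nn[OF nn' k] le] gamma_pos z_pos k by auto
  also have "\<dots> = wsir p' k" using wsir_eq[OF p' k] p'k by simp
  finally show ?thesis .
qed

lemma wsir_strict_increase:
  assumes p: "p \<in> carrier_vec K" and p': "p' \<in> carrier_vec K" and k: "k < K"
    and p'k: "p' $ k = p $ k" and pos: "0 < p $ k"
    and nn': "\<forall>j<K. 0 \<le> p' $ j" and lt: "interf p' k < interf p k"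
  shows "wsir p k < wsir p' k"
  using wsir_eq[OF p k] wsir_eq[OF p' k] p'k gamma_pos z_pos k
    ratio_strict_antimono_interference[OF pos _ interf_nn[OF nn' k] lt] by auto

lemma interf_smult: "p \<in> carrier_vec K \<Longrightarrow> interf (s \<cdot>\<^sub>v p) k = s * interf p k"
  unfolding interf_def sum_distrib_left by (intro sum.cong) auto

lemma load_smult: "p \<in> carrier_vec K \<Longrightarrow> load (s \<cdot>\<^sub>v p) n = s * load p n"
  unfolding load_def sum_distrib_left by (intro sum.cong) auto

lemma wsir_scale_up:
  assumes p: "p \<in> carrier_vec K" and pos: "\<forall>j<K. 0 < p $ j" and s: "1 < s" and k: "k < K"
  shows "wsir p k < wsir (s \<cdot>\<^sub>v p) k"
proof -
  have "0 \<le> interf p k" using interf_nn pos k by (simp add: less_imp_le)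
  thus ?thesis
    using ratio_scale_up[OF _ _ _ _ s] pos gamma_pos z_pos k p
      wsir_eq[OF p k] wsir_eq[of "s \<cdot>\<^sub>v p" k] interf_smult[OF p] by auto
qed

lemma GV: "i < K \<Longrightarrow> j < K \<Longrightarrow> (Gam K gamma * V) $$ (i,j) = gamma $ i * V $$ (i,j)"
proof -
  assume i: "i < K" and j: "j < K"
  have "(Gam K gamma * V) $$ (i,j) = (\<Sum>l\<in>{0..<K}. (if i = l then gamma $ i else 0) * V $$ (l,j))"
    using i j V_dim by (simp add: Gam_def scalar_prod_def)
  also have "\<dots> = (\<Sum>l\<in>{0..<K}. (if l = i then gamma $ i * V $$ (i,j) else 0))"
    by (intro sum.cong) auto
  also have "\<dots> = gamma $ i * V $$ (i,j)" using i by simp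
  finally show ?thesis .
qed

lemma GV_dim: "Gam K gamma * V \<in> carrier_mat K K"
  using V_dim unfolding Gam_def by (intro mult_carrier_mat) auto

lemma Gz: "i < K \<Longrightarrow> (Gam K gamma *\<^sub>v z) $ i = gamma $ i * z $ i"
proof -
  assume i: "i < K"
  have "(Gam K gamma *\<^sub>v z) $ i = (\<Sum>l\<in>{0..<K}. (if i = l then gamma $ i else 0) * z $ l)"
    using i z_dim by (simp add: Gam_def scalar_prod_def)
  also have "\<dots> = (\<Sum>l\<in>{0..<K}. (if l = i then gamma $ i * z $ i else 0))"
    by (intro sum.cong) auto
  also have "\<dots> = gamma $ i * z $ i" using i by simp
  finally show ?thesis .
qed

lemma Gz_dim: "Gam K gamma *\<^sub>v z \<in> carrier_vec K"
  unfolding carrier_vec_def Gam_def by simp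

lemma B_dim: "Bmat K C phat V z gamma n \<in> carrier_mat K K"
  unfolding Bmat_def using GV_dim by auto

lemma B_entry:
  assumes n: "n < N" and i: "i < K" and j: "j < K"
  shows "Bmat K C phat V z gamma n $$ (i,j)
     = gamma $ i * V $$ (i,j) + (1 / phat $ n) * (gamma $ i * z $ i * C $$ (n,j))"
proof -
  let ?P = "mat_of_cols K [Gam K gamma *\<^sub>v z] * mat_of_rows K [row C n]"
  have "?P \<in> carrier_mat K K" by (intro mult_carrier_mat) auto
  moreover have "?P $$ (i,j) = (Gam K gamma *\<^sub>v z) $ i * row C n $ j"
    using i j Gz_dim by (simp add: scalar_prod_def mat_of_cols_index mat_of_rows_index row_def col_def)
  ultimately show ?thesis
    unfolding Bmat_def using i j n C_dim GV[OF i j] Gz[OF i] by simp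
qed

lemma A_dim: "Amat K C phat V z gamma n \<in> carrier_mat (K+1) (K+1)"
  unfolding Amat_def using GV_dim by (intro four_block_carrier_mat) auto

lemma A_bottom_left:
  assumes n: "n < N" and j: "j < K"
  shows "((1 / phat $ n) \<cdot>\<^sub>m (mat_of_rows K [row C n] * (Gam K gamma * V))) $$ (0, j)
     = (1 / phat $ n) * (\<Sum>l<K. C $$ (n,l) * (gamma $ l * V $$ (l,j)))"
proof -
  let ?R = "mat_of_rows K [row C n]" and ?GV = "Gam K gamma * V"
  have d: "dim_row ?GV = K" "dim_col ?GV = K" using GV_dim by auto
  have "row ?R 0 \<bullet> col ?GV j = (\<Sum>l<K. C $$ (n,l) * (gamma $ l * V $$ (l,j)))"
    unfolding scalar_prod_def lessThan_atLeast0
  proof (rule sum.cong)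
    show "{0..<dim_vec (col ?GV j)} = {0..<K}" by (simp add: Gam_def)
  next
    fix l assume "l \<in> {0..<K}"
    hence l: "l < K" by simp
    have "col ?GV j $ l = gamma $ l * V $$ (l,j)" using l j d GV[OF l j] by (simp del: index_mult_mat(1))
    thus "row ?R 0 $ l * col ?GV j $ l = C $$ (n,l) * (gamma $ l * V $$ (l,j))"
      using l C_dim n by (simp add: mat_of_rows_index)
  qed
  thus ?thesis using j d by simp
qed

lemma A_bottom_right:
  assumes n: "n < N"
  shows "row C n \<bullet> (Gam K gamma *\<^sub>v z) = (\<Sum>l<K. C $$ (n,l) * (gamma $ l * z $ l))"
  unfolding scalar_prod_def lessThan_atLeast0
proof (rule sum.cong)
  show "{0..<dim_vec (Gam K gamma *\<^sub>v z)} = {0..<K}" by (simp add: Gam_def)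
next
  fix l assume "l \<in> {0..<K}"
  hence l: "l < K" by simp
  show "row C n $ l * (Gam K gamma *\<^sub>v z) $ l = C $$ (n,l) * (gamma $ l * z $ l)"
    using Gz[OF l] l C_dim n by (simp del: index_mult_mat_vec)
qed

lemma A_entry:
  assumes n: "n < N" and i: "i < K + 1" and j: "j < K + 1"
  shows "Amat K C phat V z gamma n $$ (i,j)
   = (if i < K then if j < K then gamma $ i * V $$ (i,j) else gamma $ i * z $ i
      else if j < K then (1 / phat $ n) * (\<Sum>l<K. C $$ (n,l) * (gamma $ l * V $$ (l,j)))
      else (1 / phat $ n) * (\<Sum>l<K. C $$ (n,l) * (gamma $ l * z $ l)))"
proof -
  let ?GV = "Gam K gamma * V"
  let ?s = "1 / phat $ n"
  have d: "dim_row ?GV = K" "dim_col ?GV = K" using GV_dim by auto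
  have e: "Amat K C phat V z gamma n $$ (i,j) = (if i < K then if j < K then ?GV $$ (i,j)
        else mat_of_cols K [Gam K gamma *\<^sub>v z] $$ (i, j - K)
      else if j < K then (?s \<cdot>\<^sub>m (mat_of_rows K [row C n] * ?GV)) $$ (i - K, j)
      else ?s * (row C n \<bullet> (Gam K gamma *\<^sub>v z)))"
    unfolding Amat_def using i j d by (subst index_mat_four_block) auto
  consider "i < K" "j < K" | "i < K" "j = K" | "i = K" "j < K" | "i = K" "j = K"
    using i j by linarith
  then show ?thesis
  proof cases
    case 1 thus ?thesis using e GV by simp
  next
    case 2 thus ?thesis using e Gz by (simp add: mat_of_cols_index)
  next
    case 3 thus ?thesis using e A_bottom_left[OF n] by simp
  next
    case 4 thus ?thesis using e A_bottom_right[OF n] by simp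
  qed
qed

lemma B_nn: "n < N \<Longrightarrow> \<forall>i<K. \<forall>j<K. Bmat K C phat V z gamma n $$ (i,j) \<ge> 0"
proof (intro allI impI)
  fix i j assume n: "n < N" and i: "i < K" and j: "j < K"
  have "0 \<le> gamma $ i" "0 \<le> z $ i" "0 \<le> 1 / phat $ n"
    using gamma_pos z_pos phat_pos i n by (auto simp: less_imp_le)
  thus "Bmat K C phat V z gamma n $$ (i,j) \<ge> 0" unfolding B_entry[OF n i j]
    using V_nonneg C_nn[OF n j] i j by (intro add_nonneg_nonneg mult_nonneg_nonneg) auto
qed

lemma A_nn: "n < N \<Longrightarrow> \<forall>i<K+1. \<forall>j<K+1. Amat K C phat V z gamma n $$ (i,j) \<ge> 0"
proof (intro allI impI)
  fix i j assume n: "n < N" and i: "i < K+1" and j: "j < K+1"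
  have "\<forall>l<K. 0 \<le> gamma $ l \<and> 0 \<le> z $ l" "0 \<le> 1 / phat $ n"
    using gamma_pos z_pos phat_pos n by (auto simp: less_imp_le)
  thus "Amat K C phat V z gamma n $$ (i,j) \<ge> 0" unfolding A_entry[OF n i j]
    using V_nonneg C_nn[OF n] i j by (auto intro!: sum_nonneg mult_nonneg_nonneg divide_nonneg_nonneg)
qed

end

locale optimum = network +
  fixes pbar :: "real vec"
  assumes pbar_in: "pbar \<in> pset K C phat"
    and pbar_max: "\<forall>p \<in> pset K C phat. min_wsir p \<le> min_wsir pbar"
begin

abbreviation c where "c \<equiv> min_wsir pbar"

lemma c_pos: "c > 0"
proof -
  obtain p0 where p0: "p0 \<in> pset K C phat" "\<forall>k<K. p0 $ k > 0" using exists_positive_feasible by auto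
  have p0c: "p0 \<in> carrier_vec K" "\<forall>k<K. 0 \<le> p0 $ k" using p0(1) by (auto simp: pset_iff)
  obtain k where k: "k < K" "min_wsir p0 = wsir p0 k" using min_wsir_attained by auto
  have "wsir p0 k > 0"
    using wsir_eq[OF p0c(1) k(1)] interf_nn[OF p0c(2) k(1)] p0(2) gamma_pos z_pos k(1)
    by (auto intro!: divide_pos_pos)
  thus ?thesis using k pbar_max p0 by fastforce
qed

(* An optimal power vector uses every link, since a silent link has weighted SIR 0 < c. *)
lemma optimal_pos:
  assumes p: "p \<in> pset K C phat" and opt: "min_wsir p = c" and k: "k < K"
  shows "p $ k > 0"
proof -
  have "wsir p k > 0" using min_wsir_le[OF k, of p] opt c_pos by auto
  moreover have "p $ k \<ge> 0" using p k by (auto simp: pset_iff)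
  ultimately show ?thesis using p k by (cases "p $ k = 0") (auto simp: wsir_eq pset_iff)
qed

lemma rebalance_step:
  assumes p: "p \<in> pset K C phat" and opt: "min_wsir p = c"
    and k0: "k0 < K" "wsir p k0 \<noteq> c"
  shows "\<exists>p'. p' \<in> pset K C phat \<and> min_wsir p' = c \<and> wsir p' k0 \<noteq> c \<and>
     {k. k < K \<and> wsir p' k = c} \<subset> {k. k < K \<and> wsir p k = c}"
proof -
  have pc: "p \<in> carrier_vec K" and pnn: "\<forall>k<K. 0 \<le> p $ k" using p by (auto simp: pset_iff)
  define S where "S = {k. k < K \<and> wsir p k = c}"
  define T where "T = {k. k < K \<and> wsir p k \<noteq> c}"
  have T_above: "c < wsir p k" if "k \<in> T" for k
    using min_wsir_le[of k p] opt that unfolding T_def by force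
  obtain i where "i < K" "wsir p i = c" using min_wsir_attained[of p] opt by auto
  hence "i \<in> S" and "S \<subseteq> {..<K}" and "k0 \<notin> S" using k0 by (auto simp: S_def)
  from irreducible_edge_leaving[OF V_dim V_nonneg V_irr this(2,1) k0(1) this(3)]
  obtain a b where ab: "a \<in> S" "b < K" "b \<notin> S" "V $$ (a,b) > 0" by blast
  obtain t where t: "0 < t" "t < 1" "\<forall>k\<in>T. c < t * wsir p k"
    using exists_uniform_shrink[OF _ c_pos, of T "wsir p"] T_above by (auto simp: T_def)
  define p' where "p' = vec K (\<lambda>k. if k \<in> T then t * p $ k else p $ k)"
  have p'c: "p' \<in> carrier_vec K" by (simp add: p'_def)
  have p'nn: "\<forall>k<K. 0 \<le> p' $ k" using t pnn by (auto simp: p'_def)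
  have p'le: "\<forall>k<K. p' $ k \<le> p $ k" using t pnn by (auto simp: p'_def intro: mult_left_le_one_le)
  have p'in: "p' \<in> pset K C phat" by (rule pset_downward_closed[OF p p'c p'nn p'le])
  have T_stays: "c < wsir p' k" if k: "k \<in> T" for k
  proof -
    have kK: "k < K" using k by (simp add: T_def)
    have "t * wsir p k \<le> wsir p' k"
      using wsir_scaled_ge[OF pc p'c kK _ _ p'nn interf_mono[OF p'le kK]] k t pnn kK
      by (auto simp: p'_def)
    thus ?thesis using t(3) k by force
  qed
  have S_stays: "c \<le> wsir p' k" if k: "k \<in> S" for k
  proof -
    have kK: "k < K" and p'k: "p' $ k = 1 * p $ k" using k by (auto simp: p'_def S_def T_def)
    have "1 * wsir p k \<le> wsir p' k"
      by (rule wsir_scaled_ge[OF pc p'c kK p'k _ p'nn interf_mono[OF p'le kK]]) (use pnn kK in simp)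
    thus ?thesis using k by (simp add: S_def)
  qed
  have a_leaves: "c < wsir p' a"
  proof -
    have aK: "a < K" and pa: "p' $ a = p $ a" using ab(1) by (auto simp: p'_def S_def T_def)
    have "p' $ b < p $ b" using ab(2,3) t optimal_pos[OF p opt ab(2)] by (auto simp: p'_def S_def T_def)
    hence "interf p' a < interf p a" by (rule interf_strict_mono[OF p'le aK ab(2,4)])
    hence "wsir p a < wsir p' a"
      by (rule wsir_strict_increase[OF pc p'c aK pa optimal_pos[OF p opt aK] p'nn])
    thus ?thesis using ab(1) by (simp add: S_def)
  qed
  have "\<forall>k<K. c \<le> wsir p' k" using S_stays T_stays by (force simp: S_def T_def)
  hence opt': "min_wsir p' = c" using min_wsir_greatest pbar_max p'in by force
  have "{k. k < K \<and> wsir p' k = c} \<subseteq> S - {a}" using T_stays a_leaves by (force simp: S_def T_def)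
  hence "{k. k < K \<and> wsir p' k = c} \<subset> S" using ab(1) by blast
  moreover have "wsir p' k0 \<noteq> c" using T_stays[of k0] k0 by (auto simp: T_def)
  ultimately show ?thesis using p'in opt' unfolding S_def by blast
qed

lemma optimal_balanced:
  "p \<in> pset K C phat \<Longrightarrow> min_wsir p = c \<Longrightarrow> card {k. k < K \<and> wsir p k = c} = m \<Longrightarrow>
   \<forall>k<K. wsir p k = c"
proof (induction m arbitrary: p rule: less_induct)
  case (less m)
  show ?case
  proof (rule ccontr)
    assume "\<not> (\<forall>k<K. wsir p k = c)"
    then obtain k0 where k0: "k0 < K" "wsir p k0 \<noteq> c" by auto
    from rebalance_step[OF less.prems(1,2) k0] obtain p' where
      p': "p' \<in> pset K C phat" "min_wsir p' = c" "wsir p' k0 \<noteq> c"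
      and shrink: "{k. k < K \<and> wsir p' k = c} \<subset> {k. k < K \<and> wsir p k = c}" by blast
    have "card {k. k < K \<and> wsir p' k = c} < m"
      using psubset_card_mono[OF _ shrink] less.prems(3) by auto
    from less.IH[OF this p'(1,2) refl] p'(3) k0 show False by auto
  qed
qed

lemma pbar_balanced: "k < K \<Longrightarrow> wsir pbar k = c"
  using optimal_balanced[OF pbar_in refl refl] by auto

lemma pbar_pos: "k < K \<Longrightarrow> pbar $ k > 0"
  using optimal_pos[OF pbar_in refl] .

lemma pbar_carrier: "pbar \<in> carrier_vec K"
  using pbar_in by (auto simp: pset_iff)

lemma pbar_fixed_point:
  assumes k: "k < K"
  shows "pbar $ k = c * (gamma $ k * (interf pbar k + z $ k))"
proof -
  define D where "D = gamma $ k * (interf pbar k + z $ k)"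
  have "D > 0" unfolding D_def
    using gamma_pos z_pos interf_nn[of pbar k] k pbar_pos
    by (auto simp: less_imp_le intro!: mult_pos_pos add_nonneg_pos)
  hence "pbar $ k = pbar $ k / D * D" by simp
  also have "pbar $ k / D = c"
    using pbar_balanced[OF k] wsir_eq[OF pbar_carrier k] unfolding D_def by linarith
  finally show ?thesis by (simp only: D_def)
qed

abbreviation g where "g n \<equiv> gfun C phat n pbar"

lemma g_eq: "n < N \<Longrightarrow> g n = load pbar n / phat $ n"
  using gfun_eq[OF pbar_carrier] .

lemma g_le1: "n < N \<Longrightarrow> g n \<le> 1"
  using pbar_in phat_pos by (auto simp: g_eq pset_iff divide_le_eq_1)

(* Some power constraint is active at the optimum, otherwise scaling pbar up would improve it. *)
lemma max_load_eq_1: "Max {g m | m. m < N} = 1"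
proof -
  define G where "G = Max (g ` {..<N})"
  have fin: "finite (g ` {..<N})" "g ` {..<N} \<noteq> {}" using Npos by auto
  have G_le: "G \<le> 1" unfolding G_def using fin g_le1 by (subst Max_le_iff) auto
  have G_ge: "g n \<le> G" if "n < N" for n unfolding G_def using fin that by (intro Max_ge) auto
  obtain n0 where n0: "n0 < N" "C $$ (n0, 0) = 1" using C_col Kpos by auto
  have "C $$ (n0, 0) * pbar $ 0 \<le> load pbar n0" unfolding load_def
    using C_nn[OF n0(1)] pbar_pos Kpos by (intro member_le_sum mult_nonneg_nonneg) (auto simp: less_imp_le)
  hence "0 < g n0" using n0 pbar_pos[OF Kpos] g_eq[OF n0(1)] phat_pos by auto
  hence G_pos: "0 < G" using G_ge[OF n0(1)] by auto
  have "\<not> G < 1"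
  proof
    assume G_lt: "G < 1"
    define s where "s = 1 / G"
    have s: "1 < s" using G_lt G_pos by (simp add: s_def)
    have "load (s \<cdot>\<^sub>v pbar) n \<le> phat $ n" if n: "n < N" for n
    proof -
      have "load pbar n \<le> G * phat $ n" using G_ge[OF n] g_eq[OF n] phat_pos n by (simp add: divide_le_eq)
      hence "s * load pbar n \<le> s * (G * phat $ n)" using s by (intro mult_left_mono) auto
      thus ?thesis using G_pos load_smult[OF pbar_carrier] by (simp add: s_def)
    qed
    moreover have "\<forall>k<K. 0 \<le> (s \<cdot>\<^sub>v pbar) $ k" using pbar_pos pbar_carrier s by (simp add: less_imp_le)
    ultimately have feasible: "s \<cdot>\<^sub>v pbar \<in> pset K C phat" using pbar_carrier by (auto simp: pset_iff)
    obtain k where k: "k < K" "min_wsir (s \<cdot>\<^sub>v pbar) = wsir (s \<cdot>\<^sub>v pbar) k" using min_wsir_attained by auto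
    have "c < min_wsir (s \<cdot>\<^sub>v pbar)"
      using k min_wsir_le[OF k(1), of pbar] wsir_scale_up[OF pbar_carrier _ s k(1)] pbar_pos by auto
    thus False using pbar_max feasible by force
  qed
  thus ?thesis using G_le unfolding Collect_lessThan_image G_def by simp
qed

lemma N0_eq: "N0 N C phat pbar = {n. n < N \<and> g n = 1}"
  unfolding N0_def max_load_eq_1 by auto

lemma exists_tight: "\<exists>n0<N. g n0 = 1"
proof -
  have "Max {g m | m. m < N} \<in> {g m | m. m < N}"
    unfolding Collect_lessThan_image using Npos by (intro Max_in) auto
  thus ?thesis using max_load_eq_1 by auto
qed

lemma B_row_sum:
  assumes n: "n < N" and i: "i < K"
  shows "(\<Sum>j<K. Bmat K C phat V z gamma n $$ (i,j) * pbar $ j) = pbar $ i / c - gamma $ i * z $ i * (1 - g n)"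
proof -
  have "(\<Sum>j<K. Bmat K C phat V z gamma n $$ (i,j) * pbar $ j)
     = (\<Sum>j<K. gamma $ i * (V $$ (i,j) * pbar $ j) + (gamma $ i * z $ i / phat $ n) * (C $$ (n,j) * pbar $ j))"
    by (intro sum.cong) (auto simp: B_entry[OF n i] algebra_simps)
  also have "\<dots> = gamma $ i * interf pbar i + gamma $ i * z $ i * g n"
    by (simp add: sum.distrib interf_def load_def g_eq[OF n] sum_distrib_left sum_divide_distrib ac_simps)
  also have "\<dots> = pbar $ i / c - gamma $ i * z $ i * (1 - g n)"
    using c_pos by (subst pbar_fixed_point[OF i]) (simp add: field_simps)
  finally show ?thesis .
qed

lemma A_row_sum:
  assumes n: "n < N" and i: "i < K + 1"
  shows "(\<Sum>j<K+1. Amat K C phat V z gamma n $$ (i,j) * (if j < K then pbar $ j else 1))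
     = (if i < K then pbar $ i / c else g n / c)"
proof -
  let ?A = "Amat K C phat V z gamma n"
  let ?q = "\<lambda>j. if j < K then pbar $ j else (1::real)"
  have split_last: "(\<Sum>j<K+1. ?A $$ (i,j) * ?q j) = (\<Sum>j<K. ?A $$ (i,j) * pbar $ j) + ?A $$ (i,K)"
    by simp
  show ?thesis
  proof (cases "i < K")
    case True
    have "(\<Sum>j<K. ?A $$ (i,j) * pbar $ j) = (\<Sum>j<K. gamma $ i * (V $$ (i,j) * pbar $ j))"
      by (intro sum.cong) (use True n i in \<open>auto simp: A_entry\<close>)
    also have "\<dots> = gamma $ i * interf pbar i" by (simp add: interf_def sum_distrib_left)
    finally have "(\<Sum>j<K+1. ?A $$ (i,j) * ?q j) = gamma $ i * interf pbar i + gamma $ i * z $ i"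
      using split_last True n by (simp add: A_entry)
    also have "\<dots> = pbar $ i / c" using c_pos by (subst pbar_fixed_point[OF True]) (simp add: field_simps)
    finally show ?thesis using True by simp
  next
    case False
    let ?s = "1 / phat $ n"
    have "(\<Sum>j<K. ?A $$ (i,j) * pbar $ j)
        = (\<Sum>j<K. ?s * (\<Sum>l<K. C $$ (n,l) * (gamma $ l * V $$ (l,j))) * pbar $ j)"
      by (intro sum.cong) (use False n i in \<open>auto simp: A_entry\<close>)
    also have "\<dots> = ?s * (\<Sum>l<K. C $$ (n,l) * gamma $ l * interf pbar l)"
      unfolding interf_def sum_distrib_left sum_distrib_right
      by (subst sum.swap) (simp add: ac_simps)
    finally have "(\<Sum>j<K+1. ?A $$ (i,j) * ?q j) = ?s * (\<Sum>l<K. C $$ (n,l) * gamma $ l * interf pbar l)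
        + ?s * (\<Sum>l<K. C $$ (n,l) * (gamma $ l * z $ l))"
      using split_last False n i by (simp add: A_entry)
    also have "\<dots> = ?s * (\<Sum>l<K. C $$ (n,l) * (gamma $ l * (interf pbar l + z $ l)))"
      by (simp add: distrib_left sum.distrib mult.assoc)
    also have "\<dots> = ?s * (\<Sum>l<K. C $$ (n,l) * pbar $ l / c)"
      using pbar_fixed_point c_pos by (intro arg_cong[where f = "\<lambda>x. ?s * x"] sum.cong) (auto simp: field_simps)
    also have "\<dots> = g n / c" by (simp add: g_eq[OF n] load_def sum_divide_distrib mult.commute)
    finally show ?thesis using False by simp
  qed
qed

lemma rhoB_le:
  assumes n: "n < N"
  shows "rho (Bmat K C phat V z gamma n) \<le> 1 / c"
proof (rule collatz_wielandt_upper[OF B_dim Kpos B_nn[OF n], where p = "\<lambda>j. pbar $ j"])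
  show "\<forall>i<K. 0 < pbar $ i" using pbar_pos by auto
  show "\<forall>i<K. (\<Sum>j<K. Bmat K C phat V z gamma n $$ (i, j) * pbar $ j) \<le> 1 / c * pbar $ i"
    using B_row_sum[OF n] gamma_pos z_pos g_le1[OF n] by (simp add: less_imp_le)
qed

lemma rhoB_lt:
  assumes n: "n < N" and g1: "g n < 1"
  shows "rho (Bmat K C phat V z gamma n) < 1 / c"
proof (rule collatz_wielandt_strict[OF B_dim Kpos B_nn[OF n], where p = "\<lambda>j. pbar $ j"])
  show "\<forall>i<K. 0 < pbar $ i" using pbar_pos by auto
  show "\<forall>i<K. (\<Sum>j<K. Bmat K C phat V z gamma n $$ (i, j) * pbar $ j) < 1 / c * pbar $ i"
    using B_row_sum[OF n] gamma_pos z_pos g1 by simp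
qed

lemma rhoB_eq:
  assumes n: "n < N" and g1: "g n = 1"
  shows "rho (Bmat K C phat V z gamma n) = 1 / c"
proof -
  have "1 / c \<le> rho (Bmat K C phat V z gamma n)"
  proof (rule eigenvalue_le_rho[OF B_dim Kpos, of "\<lambda>j. pbar $ j"])
    show "\<exists>i<K. pbar $ i \<noteq> 0" using pbar_pos Kpos by force
    show "0 \<le> 1 / c" using c_pos by simp
    show "\<forall>i<K. (\<Sum>j<K. Bmat K C phat V z gamma n $$ (i, j) * pbar $ j) = 1 / c * pbar $ i"
      using B_row_sum[OF n] g1 by simp
  qed
  thus ?thesis using rhoB_le[OF n] by simp
qed

lemma rhoA_le:
  assumes n: "n < N"
  shows "rho (Amat K C phat V z gamma n) \<le> 1 / c"
proof (rule collatz_wielandt_upper[OF A_dim _ A_nn[OF n], where p = "\<lambda>j. if j < K then pbar $ j else 1"])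
  show "0 < K + 1" by simp
  show "\<forall>i<K+1. 0 < (if i < K then pbar $ i else 1)" using pbar_pos by auto
  show "\<forall>i<K+1. (\<Sum>j<K+1. Amat K C phat V z gamma n $$ (i, j) * (if j < K then pbar $ j else 1))
     \<le> 1 / c * (if i < K then pbar $ i else 1)"
    using A_row_sum[OF n] g_le1[OF n] c_pos by (auto simp: divide_right_mono)
qed

lemma rhoA_eq:
  assumes n: "n < N" and g1: "g n = 1"
  shows "rho (Amat K C phat V z gamma n) = 1 / c"
proof -
  have "1 / c \<le> rho (Amat K C phat V z gamma n)"
  proof (rule eigenvalue_le_rho[OF A_dim, where p = "\<lambda>j. if j < K then pbar $ j else 1"])
    show "0 < K + 1" by simp
    show "\<exists>i<K+1. (if i < K then pbar $ i else 1) \<noteq> 0" by (intro exI[of _ K]) auto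
    show "0 \<le> 1 / c" using c_pos by simp
    show "\<forall>i<K+1. (\<Sum>j<K+1. Amat K C phat V z gamma n $$ (i, j) * (if j < K then pbar $ j else 1))
       = 1 / c * (if i < K then pbar $ i else 1)"
      using A_row_sum[OF n] g1 by auto
  qed
  thus ?thesis using rhoA_le[OF n] by simp
qed

lemma max_rhoB: "Max {rho (Bmat K C phat V z gamma n) | n. n < N} = 1 / c"
proof -
  obtain n0 where "n0 < N" "g n0 = 1" using exists_tight by auto
  thus ?thesis using rhoB_le rhoB_eq by (intro Max_attained) auto
qed

lemma max_rhoA: "Max {rho (Amat K C phat V z gamma n) | n. n < N} = 1 / c"
proof -
  obtain n0 where "n0 < N" "g n0 = 1" using exists_tight by auto
  thus ?thesis using rhoA_le rhoA_eq by (intro Max_attained) auto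
qed

lemma active_iff_rhoB_max:
  assumes n: "n < N"
  shows "g n = 1 \<longleftrightarrow> rho (Bmat K C phat V z gamma n) = 1 / c"
proof
  assume "g n = 1"
  thus "rho (Bmat K C phat V z gamma n) = 1 / c" by (rule rhoB_eq[OF n])
next
  assume "rho (Bmat K C phat V z gamma n) = 1 / c"
  thus "g n = 1" using rhoB_lt[OF n] g_le1[OF n] by force
qed

lemma feasible_iff: "(\<exists>p \<in> pset K C phat. \<forall>k<K. SIR V z k p \<ge> gamma $ k) \<longleftrightarrow> 1 \<le> c"
proof
  assume "\<exists>p \<in> pset K C phat. \<forall>k<K. SIR V z k p \<ge> gamma $ k"
  then obtain p where "p \<in> pset K C phat" "\<forall>k<K. 1 \<le> wsir p k" using wsir_ge_1_iff by auto
  thus "1 \<le> c" using min_wsir_greatest pbar_max by force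
next
  assume c1: "1 \<le> c"
  have "SIR V z k pbar \<ge> gamma $ k" if k: "k < K" for k
  proof -
    have "1 \<le> wsir pbar k" using pbar_balanced[OF k] c1 by linarith
    thus ?thesis using wsir_ge_1_iff[OF k] by blast
  qed
  thus "\<exists>p \<in> pset K C phat. \<forall>k<K. SIR V z k p \<ge> gamma $ k" using pbar_in by blast
qed

end

theorem theorem2:
  fixes K N :: nat and C V :: "real mat" and phat z gamma pbar :: "real vec"
  assumes K2: "K \<ge> 2"
    and C_dim: "C \<in> carrier_mat N K"
    and C_01: "\<forall>n<N. \<forall>k<K. C $$ (n, k) = 0 \<or> C $$ (n, k) = 1"
    and C_col: "\<forall>k<K. \<exists>n<N. C $$ (n, k) = 1"
    and phat_dim: "phat \<in> carrier_vec N" and phat_pos: "\<forall>n<N. phat $ n > 0"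
    and V_dim: "V \<in> carrier_mat K K"
    and V_nonneg: "\<forall>i<K. \<forall>j<K. V $$ (i, j) \<ge> 0"
    and V_diag: "\<forall>k<K. V $$ (k, k) = 0"
    and V_irr: "irreducible_mat V"
    and z_dim: "z \<in> carrier_vec K" and z_pos: "\<forall>k<K. z $ k > 0"
    and gamma_dim: "gamma \<in> carrier_vec K" and gamma_pos: "\<forall>k<K. gamma $ k > 0"
    and pbar_in: "pbar \<in> pset K C phat"
    and pbar_max: "\<forall>p \<in> pset K C phat.
        Min {SIR V z k p / gamma $ k | k. k < K} \<le> Min {SIR V z k pbar / gamma $ k | k. k < K}"
  shows "N0 N C phat pbar =
           {n0. n0 < N \<and> rho (Bmat K C phat V z gamma n0) = Max {rho (Bmat K C phat V z gamma n) | n. n < N}}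
         \<and> ((\<exists>p \<in> pset K C phat. \<forall>k<K. SIR V z k p \<ge> gamma $ k) \<longleftrightarrow>
              (Max {rho (Bmat K C phat V z gamma n) | n. n < N} = Max {rho (Amat K C phat V z gamma n) | n. n < N}
               \<and> Max {rho (Amat K C phat V z gamma n) | n. n < N} \<le> 1))"
proof -
  interpret optimum K N C V phat z gamma pbar
    using K2 C_dim C_01 C_col phat_pos V_dim V_nonneg V_irr z_dim z_pos gamma_pos
      pbar_in pbar_max by unfold_locales auto
  have "N0 N C phat pbar =
      {n0. n0 < N \<and> rho (Bmat K C phat V z gamma n0) = Max {rho (Bmat K C phat V z gamma n) | n. n < N}}"
    unfolding N0_eq max_rhoB using active_iff_rhoB_max by auto
  moreover have "1 / c \<le> 1 \<longleftrightarrow> 1 \<le> c" using c_pos by (simp add: divide_le_eq)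
  ultimately show ?thesis using feasible_iff max_rhoA max_rhoB by simp
qed

end
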